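(* Let $d\ge 1$, let $\mathbf C_1,\mathbf C_2$ be real symmetric strictly positive-definite $d\times d$ matrices, let $\lambda_1,\lambda_2\in[0,1]$ with $\lambda_1+\lambda_2=1$, and set $\mathbf C=\lambda_1\mathbf C_1+\lambda_2\mathbf C_2$. For $\mathbf t\in\mathbb R^d$ define $$F^{(1)}(\mathbf t)=\sum_{a=1,2}\lambda_a\exp\Big(\tfrac12\mathbf t^{\rm T}\mathbf C_a\mathbf t\Big)-\exp\Big(\tfrac12\mathbf t^{\rm T}\mathbf C\mathbf t\Big),$$ $$F^{(2)}(\mathbf t)=F^{(1)}(\mathbf t)\,\log\big[(2\pi)^d\det\mathbf C\big]+\sum_{a=1,2}\lambda_a\exp\Big(\tfrac12\mathbf t^{\rm T}\mathbf C_a\mathbf t\Big)\,\mathrm{tr}\big(\mathbf C^{-1}\mathbf C_a\big)-d\exp\Big(\tfrac12\mathbf t^{\rm T}\mathbf C\mathbf t\Big),$$ and $\mathbb S=\{\mathbf t\in\mathbb R^d:\ F^{(1)}(\mathbf t)\ge 0\ \text{and}\ F^{(2)}(\mathbf t)\le 0\}$. If $\mathbf t\in\mathbb S$, then $$h(f^{\rm No}_{\mathbf C})\exp\Big(\tfrac12\mathbf t^{\rm T}\mathbf C\mathbf t\Big)-\lambda_1h(f^{\rm No}_{\mathbf C_1})\exp\Big(\tfrac12\mathbf t^{\rm T}\mathbf C_1\mathbf t\Big)-\lambda_2h(f^{\rm No}_{\mathbf C_2})\exp\Big(\tfrac12\mathbf t^{\rm T}\mathbf C_2\mathbf t\Big)\ge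 0,$$ i.e. $$\log\big[(2\pi e)^d\det\mathbf C\big]\exp\Big(\tfrac12\mathbf t^{\rm T}\mathbf C\mathbf t\Big)-\sum_{a=1,2}\lambda_a\log\big[(2\pi e)^d\det\mathbf C_a\big]\exp\Big(\tfrac12\mathbf t^{\rm T}\mathbf C_a\mathbf t\Big)\ge 0,$$ with equality if and only if $\lambda_1\lambda_2=0$ or $\mathbf C_1=\mathbf C_2$.
   Context: $\log$ denotes the natural logarithm. For a strictly positive-definite $d\times d$ matrix $\mathbf C$, $f^{\rm No}_{\mathbf C}(\mathbf x)=(2\pi)^{-d/2}(\det\mathbf C)^{-1/2}\exp(-\tfrac12\mathbf x^{\rm T}\mathbf C^{-1}\mathbf x)$ is the density of the centered normal distribution $\mathrm N(\mathbf 0,\mathbf C)$ on $\mathbb R^d$, and $h(f)=-\int_{\mathbb R^d}f\log f\,d\mathbf x$ is the Shannon differential entropy, so that $h(f^{\rm No}_{\mathbf C})=\tfrac12\log\big[(2\pi e)^d\det\mathbf C\big]$. The left-hand side equals $\sigma_{\mathbf t}(\mathbf C)-\lambda_1\sigma_{\mathbf t}(\mathbf C_1)-\lambda_2\sigma_{\mathbf t}(\mathbf C_2)$ where $\sigma_{\mathbf t}(\mathbf C)=-\int_{\mathbb R^d}e^{\mathbf t^{\rm T}\mathbf x}f^{\rm No}_{\mathbf C}(\mathbf x)\log f^{\rm No}_{\mathbf C}(\mathbf x)\,d\mathbf x$ is the weighted differential entropy with exponential weight function $\phi(\mathbf x)=e^{\mathbf t^{\rm T}\mathbf x}$. *)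

theory Defs
  imports "HOL-Analysis.Analysis"
begin

definition spd :: "real^'n^'n \<Rightarrow> bool" where
  "spd A \<longleftrightarrow> transpose A = A \<and> (\<forall>x. x \<noteq> 0 \<longrightarrow> x \<bullet> (A *v x) > 0)"

definition qform :: "real^'n^'n \<Rightarrow> real^'n \<Rightarrow> real" where
  "qform A t = t \<bullet> (A *v t)"

end

theory Submission
  imports Defs
begin

text \<open>
  Let D(C, A) = tr(C^-1 A) - d - log(det A / det C) be the log-det divergence.
  A C-orthonormal basis of generalised eigenvectors of A, found one at a time by maximising the
  Rayleigh quotient x'Ax / x'Cx on the C-orthogonal complement of those already found,
  diagonalises both matrices and turns D(C, A) into the sum of mu_i - 1 - log mu_i over the
  generalised eigenvalues mu_i; so D(C, A) \<ge> 0, with equality only for A = C.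
  Expanding the logarithms gives
  G = - F2(t) + l1 exp(t'C1t/2) D(C, C1) + l2 exp(t'C2t/2) D(C, C2).
  Hence G \<ge> 0 whenever F2(t) \<le> 0, and G = 0 forces
  (l1 = 0 or C1 = C) and (l2 = 0 or C2 = C).
\<close>

lemma inner_matrix_vector_symmetric:
  fixes M :: "real^'n^'n"
  assumes "transpose M = M"
  shows "x \<bullet> (M *v y) = y \<bullet> (M *v x)"
  by (metis assms dot_lmul_matrix inner_commute vector_transpose_matrix)

lemma qform_add_scaleR:
  fixes M :: "real^'n^'n"
  assumes "transpose M = M"
  shows "qform M (w + s *\<^sub>R z) = qform M w + 2 * s * (z \<bullet> (M *v w)) + s\<^sup>2 * qform M z"
proof -
  have "w \<bullet> (M *v z) = z \<bullet> (M *v w)" by (rule inner_matrix_vector_symmetric[OF assms])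
  then show ?thesis
    by (simp add: qform_def power2_eq_square algebra_simps)
qed

lemma spd_scaleR_add:
  fixes A B :: "real^'n^'n"
  assumes A: "spd A" and B: "spd B" and "0 \<le> a" "0 \<le> b" "0 < a + b"
  shows "spd (a *\<^sub>R A + b *\<^sub>R B)"
  unfolding spd_def
proof (intro conjI allI impI)
  show "transpose (a *\<^sub>R A + b *\<^sub>R B) = a *\<^sub>R A + b *\<^sub>R B"
    using A B by (simp add: spd_def transpose_def vec_eq_iff)
next
  fix x :: "real^'n" assume "x \<noteq> 0"
  then have "0 < x \<bullet> (A *v x)" "0 < x \<bullet> (B *v x)" using A B by (auto simp: spd_def)
  moreover have "x \<bullet> ((a *\<^sub>R A + b *\<^sub>R B) *v x) = a * (x \<bullet> (A *v x)) + b * (x \<bullet> (B *v x))"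
    by (simp add: matrix_vector_mult_add_rdistrib scaleR_matrix_vector_assoc[symmetric] inner_add_right)
  ultimately show "0 < x \<bullet> ((a *\<^sub>R A + b *\<^sub>R B) *v x)"
    using assms(3-5) by (smt (verit) mult_nonneg_nonneg mult_pos_pos)
qed

lemma spd_invertible:
  assumes "spd C"
  shows "invertible C"
proof -
  have "inj ((*v) C)"
    unfolding vec.inj_iff_eq_0 using assms by (metis spd_def inner_zero_right less_irrefl)
  then show ?thesis
    using matrix_left_invertible_injective invertible_left_inverse by blast
qed

lemma matrix_inv_unique:
  fixes A B :: "'a::field^'n^'n"
  assumes "B ** A = mat 1"
  shows "matrix_inv A = B"
proof -
  have "A ** B = mat 1" using assms matrix_left_right_inverse by blast
  then have "\<exists>A'. A ** A' = mat 1 \<and> A' ** A = mat 1" using assms by blast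
  then have inv: "A ** matrix_inv A = mat 1 \<and> matrix_inv A ** A = mat 1"
    unfolding matrix_inv_def by (rule someI_ex)
  have "matrix_inv A = (B ** A) ** matrix_inv A" using assms by simp
  also have "\<dots> = B" using inv by (metis matrix_mul_assoc matrix_mul_rid)
  finally show ?thesis .
qed

lemma linear_le_quadratic_imp_zero:
  fixes a b :: real
  assumes "\<And>s. s * a \<le> s\<^sup>2 * b"
  shows "a = 0"
proof (rule ccontr)
  assume "a \<noteq> 0"
  define c where "c = \<bar>b\<bar> + 1"
  have "c > 0" by (simp add: c_def add_nonneg_pos)
  have "(a / c) * a \<le> (a / c)\<^sup>2 * b" by (rule assms)
  then have "a\<^sup>2 * c \<le> a\<^sup>2 * b"
    using \<open>c > 0\<close> by (simp add: divide_simps power2_eq_square)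
  moreover have "0 < a\<^sup>2" using \<open>a \<noteq> 0\<close> by simp
  ultimately show False by (simp add: c_def)
qed

lemma rayleigh_quotient_attains_max:
  fixes A C :: "real^'n^'n"
  assumes spdC: "spd C" and S: "subspace S" and "x0 \<in> S" "x0 \<noteq> 0"
  obtains w where "w \<in> S" "qform C w = 1" "\<And>x. x \<in> S \<Longrightarrow> qform A x \<le> qform A w * qform C x"
proof -
  have posC: "x \<noteq> 0 \<Longrightarrow> 0 < qform C x" for x using spdC by (simp add: spd_def qform_def)
  define R where "R x = qform A x / qform C x" for x
  have R_scaleR: "R (c *\<^sub>R x) = R x" if "c \<noteq> 0" for c x
    using that by (simp add: R_def qform_def matrix_vector_mult_scaleR)
  define T where "T = S \<inter> sphere 0 1"
  have "compact T" unfolding T_def using S by (intro closed_Int_compact closed_subspace compact_sphere)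
  moreover have "(1 / norm x0) *\<^sub>R x0 \<in> T" unfolding T_def using assms by (simp add: subspace_scale)
  moreover have "continuous_on T R"
  proof -
    have "x \<in> T \<Longrightarrow> qform C x \<noteq> 0" for x using posC[of x] by (force simp: T_def)
    then show ?thesis
      unfolding R_def qform_def
      by (intro continuous_intros matrix_vector_mult_linear_continuous_on) (simp add: qform_def)
  qed
  ultimately obtain u where "u \<in> T" and u_max: "\<And>x. x \<in> T \<Longrightarrow> R x \<le> R u"
    using continuous_attains_sup by (metis empty_iff)
  then have "u \<in> S" "u \<noteq> 0" by (auto simp: T_def)
  define w where "w = (1 / sqrt (qform C u)) *\<^sub>R u"
  have "0 < qform C u" using posC \<open>u \<noteq> 0\<close> .
  show thesis
  proof
    show "w \<in> S" unfolding w_def using S \<open>u \<in> S\<close> by (simp add: subspace_scale)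
    show w_unit: "qform C w = 1"
      using \<open>0 < qform C u\<close> by (simp add: w_def qform_def matrix_vector_mult_scaleR power2_eq_square[symmetric])
    fix x assume "x \<in> S"
    show "qform A x \<le> qform A w * qform C x"
    proof (cases "x = 0")
      case False
      then have "(1 / norm x) *\<^sub>R x \<in> T" unfolding T_def using S \<open>x \<in> S\<close> by (simp add: subspace_scale)
      then have "R x \<le> R u" using u_max R_scaleR[of "1 / norm x" x] False by fastforce
      also have "R u = R w" unfolding w_def using R_scaleR \<open>0 < qform C u\<close> by simp
      finally have "R x \<le> R w" .
      moreover have "R w = qform A w" using w_unit by (simp add: R_def)
      ultimately show ?thesis using posC[OF False] w_unit by (simp add: R_def pos_divide_le_eq)
    qed (simp add: qform_def)
  qed
qed

lemma rayleigh_maximizer_stationary: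
  fixes A C :: "real^'n^'n"
  assumes "transpose A = A" "transpose C = C" "subspace S" "w \<in> S" "qform C w = 1"
    and w_max: "\<And>x. x \<in> S \<Longrightarrow> qform A x \<le> qform A w * qform C x" and "z \<in> S"
  shows "z \<bullet> (A *v w) = qform A w * (z \<bullet> (C *v w))"
proof -
  let ?m = "qform A w"
  have "s * (2 * (z \<bullet> (A *v w) - ?m * (z \<bullet> (C *v w)))) \<le> s\<^sup>2 * (?m * qform C z - qform A z)" for s
  proof -
    have "w + s *\<^sub>R z \<in> S" using assms by (simp add: subspace_add subspace_scale)
    from w_max[OF this] show ?thesis
      using assms(1,2,5) by (simp add: qform_add_scaleR algebra_simps)
  qed
  then show ?thesis using linear_le_quadratic_imp_zero by fastforce
qed

lemma generalized_eigenvector_C_orthogonal: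
  fixes A C :: "real^'n^'n"
  assumes spdC: "spd C" and symA: "transpose A = A" and "finite V" and "card V < CARD('n)"
    and eig: "\<And>v. v \<in> V \<Longrightarrow> \<exists>\<mu>. A *v v = \<mu> *\<^sub>R (C *v v)"
  obtains w m where "qform C w = 1" "\<And>v. v \<in> V \<Longrightarrow> v \<bullet> (C *v w) = 0" "A *v w = m *\<^sub>R (C *v w)"
proof -
  have symC: "transpose C = C" using spdC by (simp add: spd_def)
  define S where "S = {x. \<forall>v\<in>V. v \<bullet> (C *v x) = 0}"
  have S: "subspace S" unfolding subspace_def S_def
    by (simp add: matrix_vector_right_distrib matrix_vector_mult_scaleR inner_add_right)
  obtain x0 where "x0 \<in> S" "x0 \<noteq> 0"
  proof -
    have "span ((*v) C ` V) \<noteq> UNIV"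
    proof
      assume "span ((*v) C ` V) = UNIV"
      then have "dim (UNIV :: (real^'n) set) \<le> card ((*v) C ` V)"
        using \<open>finite V\<close> by (intro dim_le_card) auto
      also have "\<dots> \<le> card V" using \<open>finite V\<close> by (rule card_image_le)
      finally show False using \<open>card V < CARD('n)\<close> by simp
    qed
    then obtain a where "a \<noteq> 0" "\<forall>x\<in>span ((*v) C ` V). a \<bullet> x = 0"
      using span_not_UNIV_orthogonal by blast
    then have "a \<in> S"
      by (auto simp: S_def inner_matrix_vector_symmetric[OF symC, of _ a] span_base)
    with \<open>a \<noteq> 0\<close> show thesis using that by blast
  qed
  then obtain w where "w \<in> S" "qform C w = 1" and w_max: "\<And>x. x \<in> S \<Longrightarrow> qform A x \<le> qform A w * qform C x"
    using rayleigh_quotient_attains_max[OF spdC S] by blast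
  txt \<open>As V consists of generalised eigenvectors, the residual r is C-orthogonal to V,
    i.e. z = C^-1 r lies in S; stationarity of w then gives z'Cz = z'r = 0.\<close>
  define r where "r = A *v w - qform A w *\<^sub>R (C *v w)"
  define z where "z = matrix_inv C *v r"
  have Cz: "C *v z = r"
  proof -
    obtain B where "B ** C = mat 1" using spd_invertible[OF spdC] invertible_left_inverse by blast
    then have "C ** matrix_inv C = mat 1" by (metis matrix_inv_unique matrix_left_right_inverse)
    then show ?thesis by (simp add: z_def matrix_vector_mul_assoc)
  qed
  have "z \<in> S"
  proof -
    have "v \<bullet> r = 0" if v: "v \<in> V" for v
    proof -
      obtain \<mu> where "A *v v = \<mu> *\<^sub>R (C *v v)" using eig[OF v] by blast
      then have "v \<bullet> (A *v w) = \<mu> * (w \<bullet> (C *v v))"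
        using inner_matrix_vector_symmetric[OF symA, of v w] by simp
      also have "w \<bullet> (C *v v) = v \<bullet> (C *v w)" by (rule inner_matrix_vector_symmetric[OF symC])
      finally have "v \<bullet> (A *v w) = \<mu> * (v \<bullet> (C *v w))" .
      then show ?thesis using \<open>w \<in> S\<close> v by (simp add: r_def S_def inner_diff_right)
    qed
    then show ?thesis by (simp add: S_def Cz)
  qed
  have "qform C z = 0"
    using rayleigh_maximizer_stationary[OF symA symC S \<open>w \<in> S\<close> \<open>qform C w = 1\<close> w_max \<open>z \<in> S\<close>]
    by (simp add: qform_def Cz r_def inner_diff_right)
  then have "z = 0" using spdC unfolding spd_def qform_def by force
  then have "r = 0" using Cz by simp
  then have "A *v w = qform A w *\<^sub>R (C *v w)" by (simp add: r_def)
  with \<open>qform C w = 1\<close> \<open>w \<in> S\<close> show thesis using that by (auto simp: S_def)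
qed

lemma generalized_eigenbasis:
  fixes A C :: "real^'n^'n"
  assumes spdC: "spd C" and symA: "transpose A = A"
  obtains v :: "'n \<Rightarrow> real^'n" and \<mu>
  where "\<And>i j. v i \<bullet> (C *v v j) = (if i = j then 1 else 0)" "\<And>i. A *v v i = \<mu> i *\<^sub>R (C *v v i)"
proof -
  have symC: "transpose C = C" using spdC by (simp add: spd_def)
  have "\<exists>v \<mu>. (\<forall>i\<in>K. \<forall>j\<in>K. v i \<bullet> (C *v v j) = (if i = j then 1 else 0))
      \<and> (\<forall>i\<in>K. A *v v i = \<mu> i *\<^sub>R (C *v v i))" for K :: "'n set"
    using finite[of K]
  proof (induction K rule: finite_induct)
    case (insert k K)
    then obtain v \<mu> where orth: "\<forall>i\<in>K. \<forall>j\<in>K. v i \<bullet> (C *v v j) = (if i = j then 1 else 0)"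
      and eig: "\<forall>i\<in>K. A *v v i = \<mu> i *\<^sub>R (C *v v i)" by blast
    have "card (v ` K) < CARD('n)"
      using card_image_le[of K v] card_mono[of UNIV "insert k K"] insert.hyps by simp
    moreover have "\<exists>c. A *v u = c *\<^sub>R (C *v u)" if "u \<in> v ` K" for u using eig that by auto
    ultimately obtain w m where w: "qform C w = 1" "\<And>u. u \<in> v ` K \<Longrightarrow> u \<bullet> (C *v w) = 0"
      and "A *v w = m *\<^sub>R (C *v w)"
      using generalized_eigenvector_C_orthogonal[OF spdC symA finite_imageI[OF insert.hyps(1)]] by blast
    moreover have "w \<bullet> (C *v v j) = 0" if "j \<in> K" for j
      using w(2)[of "v j"] that inner_matrix_vector_symmetric[OF symC] by simp
    ultimately show ?case
      using orth eig insert.hyps(2)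
      by (intro exI[of _ "v(k := w)"] exI[of _ "\<mu>(k := m)"]) (auto simp: qform_def)
  qed simp
  from this[of UNIV] show thesis using that by auto
qed

lemma congruence_matrix_entry:
  fixes P M :: "real^'n^'n"
  shows "(transpose P ** M ** P) $ i $ j = column i P \<bullet> (M *v column j P)"
proof -
  have "(transpose P ** M ** P) $ i $ j = (\<Sum>l\<in>UNIV. \<Sum>k\<in>UNIV. P $ k $ i * M $ k $ l * P $ l $ j)"
    by (simp add: matrix_matrix_mult_def transpose_def sum_distrib_right)
  also have "\<dots> = (\<Sum>k\<in>UNIV. \<Sum>l\<in>UNIV. P $ k $ i * M $ k $ l * P $ l $ j)" by (rule sum.swap)
  also have "\<dots> = column i P \<bullet> (M *v column j P)"
    by (simp add: inner_vec_def matrix_vector_mult_def column_def sum_distrib_left mult.assoc)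
  finally show ?thesis .
qed

lemma spd_simultaneous_diagonalization:
  fixes A C :: "real^'n^'n"
  assumes "spd C" "transpose A = A"
  obtains P D :: "real^'n^'n"
  where "transpose P ** C ** P = mat 1" "transpose P ** A ** P = D" "\<And>i j. i \<noteq> j \<Longrightarrow> D $ i $ j = 0"
proof -
  obtain v :: "'n \<Rightarrow> real^'n" and \<mu> where orth: "\<And>i j. v i \<bullet> (C *v v j) = (if i = j then 1 else 0)"
    and eig: "\<And>i. A *v v i = \<mu> i *\<^sub>R (C *v v i)"
    using generalized_eigenbasis[OF assms] by blast
  define P :: "real^'n^'n" where "P = (\<chi> i j. v j $ i)"
  have col: "column j P = v j" for j by (simp add: P_def column_def vec_eq_iff)
  have "transpose P ** C ** P = mat 1"
    unfolding vec_eq_iff by (simp add: congruence_matrix_entry col orth mat_def)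
  moreover have "(transpose P ** A ** P) $ i $ j = 0" if "i \<noteq> j" for i j
    using that by (simp add: congruence_matrix_entry col orth eig)
  ultimately show thesis using that by blast
qed

lemma spd_det_pos:
  fixes C :: "real^'n^'n"
  assumes "spd C"
  shows "0 < det C"
proof -
  have "transpose C = C" using assms by (simp add: spd_def)
  then obtain P :: "real^'n^'n" where "transpose P ** C ** P = mat 1"
    using spd_simultaneous_diagonalization[OF assms] by blast
  then have "det (transpose P ** C ** P) = 1" by simp
  then have "det P * det P * det C = 1" by (simp add: det_mul mult_ac)
  then show ?thesis
    using mult_nonneg_nonpos[of "det P * det P" "det C"] zero_le_square[of "det P"] by linarith
qed

text \<open>Twice the Kullback--Leibler divergence of N(0, A) from N(0, C).\<close>
definition logdet_divergence :: "real^'n^'n \<Rightarrow> real^'n^'n \<Rightarrow> real" where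
  "logdet_divergence C A = trace (matrix_inv C ** A) - real CARD('n) - (ln (det A) - ln (det C))"

lemma logdet_divergence_diagonalized:
  fixes A C P D :: "real^'n^'n"
  assumes spdC: "spd C" and spdA: "spd A"
    and PCP: "transpose P ** C ** P = mat 1" and PAP: "transpose P ** A ** P = D"
    and diag: "\<And>i j. i \<noteq> j \<Longrightarrow> D $ i $ j = 0"
  shows "\<forall>i. 0 < D $ i $ i" and "logdet_divergence C A = (\<Sum>i\<in>UNIV. D $ i $ i - 1 - ln (D $ i $ i))"
proof -
  show pos: "\<forall>i. 0 < D $ i $ i"
  proof
    fix i
    have "column i P \<bullet> (C *v column i P) = 1"
      using arg_cong[OF PCP, of "\<lambda>M. M $ i $ i"] by (simp add: congruence_matrix_entry mat_def)
    then have "column i P \<noteq> 0" by auto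
    then show "0 < D $ i $ i" using spdA PAP by (auto simp: spd_def congruence_matrix_entry)
  qed
  have "det P * det P * det C = 1" "det P * det P * det A = prod (\<lambda>i. D $ i $ i) UNIV"
    using arg_cong[OF PCP, of det] arg_cong[OF PAP, of det] det_diagonal[of D] diag
    by (simp_all add: det_mul algebra_simps)
  then have "det A = det C * prod (\<lambda>i. D $ i $ i) UNIV"
    by (metis mult.commute mult.left_commute mult.right_neutral)
  then have ln_det: "ln (det A) - ln (det C) = (\<Sum>i\<in>UNIV. ln (D $ i $ i))"
    using pos spd_det_pos[OF spdC] by (simp add: ln_mult prod_pos ln_prod less_imp_neq[symmetric])
  have "P ** (transpose P ** C) = mat 1"
    using PCP matrix_left_right_inverse by metis
  then have "matrix_inv C = P ** transpose P"
    by (simp add: matrix_inv_unique matrix_mul_assoc)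
  then have "trace (matrix_inv C ** A) = trace ((transpose P ** A) ** P)"
    by (metis matrix_mul_assoc trace_mul_sym)
  also have "\<dots> = (\<Sum>i\<in>UNIV. D $ i $ i)" using PAP by (simp add: trace_def)
  finally show "logdet_divergence C A = (\<Sum>i\<in>UNIV. D $ i $ i - 1 - ln (D $ i $ i))"
    by (simp add: logdet_divergence_def ln_det sum_subtractf)
qed

lemma logdet_divergence_nonneg:
  fixes A C :: "real^'n^'n"
  assumes "spd C" "spd A"
  shows "0 \<le> logdet_divergence C A"
proof -
  have "transpose A = A" using assms(2) by (simp add: spd_def)
  then obtain P D :: "real^'n^'n" where "transpose P ** C ** P = mat 1" "transpose P ** A ** P = D"
    "\<And>i j. i \<noteq> j \<Longrightarrow> D $ i $ j = 0"
    using spd_simultaneous_diagonalization[OF assms(1)] by blast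
  from logdet_divergence_diagonalized[OF assms this] show ?thesis
    by (simp add: sum_nonneg ln_le_minus_one)
qed

lemma logdet_divergence_eq_0_iff:
  fixes A C :: "real^'n^'n"
  assumes "spd C" "spd A"
  shows "logdet_divergence C A = 0 \<longleftrightarrow> A = C"
proof
  assume "A = C"
  obtain B where "B ** C = mat 1" using spd_invertible[OF assms(1)] invertible_left_inverse by blast
  then show "logdet_divergence C A = 0"
    using \<open>A = C\<close> by (simp add: logdet_divergence_def matrix_inv_unique trace_I)
next
  assume div0: "logdet_divergence C A = 0"
  have "transpose A = A" using assms(2) by (simp add: spd_def)
  then obtain P D :: "real^'n^'n" where PCP: "transpose P ** C ** P = mat 1" and PAP: "transpose P ** A ** P = D"
    and diag: "\<And>i j. i \<noteq> j \<Longrightarrow> D $ i $ j = 0"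
    using spd_simultaneous_diagonalization[OF assms(1)] by blast
  note D = logdet_divergence_diagonalized[OF assms PCP PAP diag]
  have "D $ i $ i - 1 - ln (D $ i $ i) = 0" for i
    using D div0 sum_nonneg_eq_0_iff[of UNIV "\<lambda>i. D $ i $ i - 1 - ln (D $ i $ i)"]
    by (simp add: ln_le_minus_one)
  then have "D $ i $ i = 1" for i using D(1) ln_eq_minus_one by force
  then have "D = mat 1" using diag by (simp add: vec_eq_iff mat_def)
  then have congr: "transpose P ** A ** P = transpose P ** C ** P" using PAP PCP by simp
  obtain Q where PQ: "P ** Q = mat 1"
    using PCP invertible_left_inverse invertible_right_inverse by metis
  have "transpose Q ** transpose P = mat 1" using PQ by (metis matrix_transpose_mul transpose_mat)
  then have "M = transpose Q ** (transpose P ** M ** P) ** Q" for M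
    using PQ by (metis matrix_mul_assoc matrix_mul_lid matrix_mul_rid)
  then show "A = C" using congr by metis
qed

lemma convex_combination_defect_eq_0:
  fixes h :: "'a \<Rightarrow> real"
  assumes "l1 + l2 = 1" "l1 = 0 \<or> x1 = x" "l2 = 0 \<or> x2 = x"
  shows "h x - l1 * h x1 - l2 * h x2 = 0"
proof -
  have "h x = l1 * h x + l2 * h x" using assms(1) by (metis distrib_right mult_1)
  then show ?thesis using assms(2,3) by auto
qed

lemma convex_combination_degenerate_iff:
  fixes x1 x2 :: "'a::real_vector"
  assumes "l1 + l2 = 1"
  shows "(l1 = 0 \<or> x1 = l1 *\<^sub>R x1 + l2 *\<^sub>R x2) \<and> (l2 = 0 \<or> x2 = l1 *\<^sub>R x1 + l2 *\<^sub>R x2)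
    \<longleftrightarrow> l1 * l2 = 0 \<or> x1 = x2"
  using assms by (auto simp flip: scaleR_add_left)

theorem theorem2p1:
  fixes C1 C2 :: "real^'n^'n" and l1 l2 :: real and t :: "real^'n"
  assumes "spd C1" and "spd C2"
    and "0 \<le> l1" and "l1 \<le> 1" and "0 \<le> l2" and "l2 \<le> 1" and "l1 + l2 = 1"
  defines "C \<equiv> l1 *\<^sub>R C1 + l2 *\<^sub>R C2"
  defines "d \<equiv> real CARD('n)"
  defines "F1 \<equiv> (\<lambda>s. l1 * exp (qform C1 s / 2) + l2 * exp (qform C2 s / 2) - exp (qform C s / 2))"
  defines "F2 \<equiv> (\<lambda>s. F1 s * ln ((2 * pi) powr d * det C)
            + l1 * exp (qform C1 s / 2) * trace (matrix_inv C ** C1)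
            + l2 * exp (qform C2 s / 2) * trace (matrix_inv C ** C2)
            - d * exp (qform C s / 2))"
  defines "S \<equiv> {s. F1 s \<ge> 0 \<and> F2 s \<le> 0}"
  defines "G \<equiv> ln ((2 * pi * exp 1) powr d * det C) * exp (qform C t / 2)
            - l1 * ln ((2 * pi * exp 1) powr d * det C1) * exp (qform C1 t / 2)
            - l2 * ln ((2 * pi * exp 1) powr d * det C2) * exp (qform C2 t / 2)"
  assumes "t \<in> S"
  shows "G \<ge> 0 \<and> (G = 0 \<longleftrightarrow> l1 * l2 = 0 \<or> C1 = C2)"
proof -
  have spdC: "spd C" unfolding C_def using assms(1-7) by (intro spd_scaleR_add) auto
  define E where "E M = exp (qform M t / 2)" for M :: "real^'n^'n"
  have G_eq: "G = - F2 t + l1 * E C1 * logdet_divergence C C1 + l2 * E C2 * logdet_divergence C C2"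
    using spd_det_pos[OF spdC] spd_det_pos[OF assms(1)] spd_det_pos[OF assms(2)]
    unfolding G_def F2_def F1_def E_def
    by (simp add: ln_mult logdet_divergence_def d_def algebra_simps)
  have "F2 t \<le> 0" using \<open>t \<in> S\<close> by (simp add: S_def)
  moreover have div_nonneg: "0 \<le> l1 * E C1 * logdet_divergence C C1" "0 \<le> l2 * E C2 * logdet_divergence C C2"
    using assms(3,5) logdet_divergence_nonneg[OF spdC assms(1)] logdet_divergence_nonneg[OF spdC assms(2)]
    by (simp_all add: E_def)
  ultimately have "0 \<le> G" using G_eq by linarith
  moreover have "(l1 = 0 \<or> C1 = C) \<and> (l2 = 0 \<or> C2 = C)" if "G = 0"
  proof -
    have "l1 * E C1 * logdet_divergence C C1 = 0" "l2 * E C2 * logdet_divergence C C2 = 0"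
      using that G_eq div_nonneg \<open>F2 t \<le> 0\<close> by linarith+
    then show ?thesis
      using logdet_divergence_eq_0_iff[OF spdC assms(1)] logdet_divergence_eq_0_iff[OF spdC assms(2)]
      by (simp add: E_def)
  qed
  moreover have "G = 0" if "(l1 = 0 \<or> C1 = C) \<and> (l2 = 0 \<or> C2 = C)"
    using convex_combination_defect_eq_0[OF \<open>l1 + l2 = 1\<close>, of C1 C C2
        "\<lambda>M. ln ((2 * pi * exp 1) powr d * det M) * E M"] that
    by (simp add: G_def E_def mult.assoc)
  ultimately show ?thesis
    using convex_combination_degenerate_iff[OF \<open>l1 + l2 = 1\<close>, of C1 C2] by (auto simp: C_def)
qed

end
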